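(* Assume $\mathcal R_0>1$, let $k$ satisfy $$\frac{\beta_E\nu\nu_E-(\nu_E+\delta_E)\delta_F}{\beta_E\nu\nu_E-(1-\gamma_s)(\nu_E+\delta_E)\delta_F}\,\delta_s<k<\delta_s,$$ and let $\kappa>0$ satisfy $$\frac{\delta_s-k}{k}\le\kappa\le\frac{\gamma_s\delta_F(\nu_E+\delta_E)}{\beta_E\nu\nu_E-\delta_F(\nu_E+\delta_E)}.$$ Then $\mathcal M(\kappa):=\mathcal T_1\cap\mathcal T_2(\kappa)\cap\mathcal T_3$ is positively invariant (for all Filippov solutions) for the closed-loop system $$\dot E=\beta_E F\Big(1-\frac EK\Big)-(\nu_E+\delta_E)E,\quad \dot M=(1-\nu)\nu_E E-\delta_M M,\quad \dot F=\nu\nu_E E\frac{M}{M+\gamma_sM_s}-\delta_F F,\quad \dot M_s=k(M+M_s)-\delta_sM_s.$$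
   Context: Parameters: $\beta_E,\nu_E,\delta_E,\delta_M,\delta_F,\delta_s,K>0$, $\nu\in(0,1)$, $\gamma_s\in(0,1]$, $\delta_s\ge\delta_M$. $\mathcal R_0:=\dfrac{\beta_E\nu\nu_E}{\delta_F(\nu_E+\delta_E)}$. $\mathcal D'=[0,+\infty)^4$ with points $z=(E,M,F,M_s)^T$. Sets: $\mathcal T_1=\{z\in\mathcal D':\beta_EF(1-E/K)\le(\nu_E+\delta_E)E\}$, $\mathcal T_2(\kappa)=\{z\in\mathcal D':M\le\kappa M_s\}$, $\mathcal T_3=\{z\in\mathcal D':(1-\nu)\nu_EE\le\delta_MM\}$. Solutions are Filippov solutions: locally Lipschitz $z:I\to\mathcal D'$ with $\dot z(t)\in\bigcap_{\varepsilon>0}\bigcap_{N}\overline{\mathrm{conv}}\,X\big(((z(t)+\varepsilon B)\cap\mathcal D')\setminus N\big)$ for a.e. $t$, where $X$ is the closed-loop right-hand side, $B$ the unit ball of $\mathbb R^4$, $N$ ranging over Lebesgue-null sets. Positive invariance: every Filippov solution with $z(0)\in\mathcal M(\kappa)$ stays in $\mathcal M(\kappa)$ for all $t\ge0$. *)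

theory Defs
  imports "HOL-Analysis.Analysis"
begin

text \<open>State vector z = (E, M, F, M_s) in real^4, components z$1, z$2, z$3, z$4.\<close>

definition Dprime :: "(real^4) set" where
  "Dprime = {z. \<forall>i. 0 \<le> z $ i}"

definition R0 :: "real \<Rightarrow> real \<Rightarrow> real \<Rightarrow> real \<Rightarrow> real \<Rightarrow> real" where
  "R0 \<beta>E \<nu> \<nu>E \<delta>E \<delta>F = (\<beta>E * \<nu> * \<nu>E) / (\<delta>F * (\<nu>E + \<delta>E))"

definition T1 :: "real \<Rightarrow> real \<Rightarrow> real \<Rightarrow> real \<Rightarrow> (real^4) set" where
  "T1 \<beta>E \<nu>E \<delta>E K = {z \<in> Dprime.
     \<beta>E * z$3 * (1 - z$1 / K) \<le> (\<nu>E + \<delta>E) * z$1}"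

definition T2 :: "real \<Rightarrow> (real^4) set" where
  "T2 \<kappa> = {z \<in> Dprime. z$2 \<le> \<kappa> * z$4}"

definition T3 :: "real \<Rightarrow> real \<Rightarrow> real \<Rightarrow> (real^4) set" where
  "T3 \<nu> \<nu>E \<delta>M = {z \<in> Dprime. (1 - \<nu>) * \<nu>E * z$1 \<le> \<delta>M * z$2}"

definition Mset :: "real \<Rightarrow> real \<Rightarrow> real \<Rightarrow> real \<Rightarrow> real \<Rightarrow> real \<Rightarrow> real \<Rightarrow> (real^4) set" where
  "Mset \<beta>E \<nu>E \<delta>E K \<nu> \<delta>M \<kappa> = T1 \<beta>E \<nu>E \<delta>E K \<inter> T2 \<kappa> \<inter> T3 \<nu> \<nu>E \<delta>M"

text \<open>Closed-loop right-hand side. At M + \<gamma>_s M_s = 0 the division yields 0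
  (Isabelle convention); this is a Lebesgue-null set and is irrelevant for Filippov solutions.\<close>
definition Xcl :: "real \<Rightarrow> real \<Rightarrow> real \<Rightarrow> real \<Rightarrow> real \<Rightarrow> real \<Rightarrow> real \<Rightarrow> real \<Rightarrow> real \<Rightarrow> real
    \<Rightarrow> real^4 \<Rightarrow> real^4" where
  "Xcl \<beta>E \<nu>E \<delta>E \<delta>M \<delta>F \<delta>s K \<nu> \<gamma>s k z =
     vector [ \<beta>E * z$3 * (1 - z$1 / K) - (\<nu>E + \<delta>E) * z$1,
              (1 - \<nu>) * \<nu>E * z$1 - \<delta>M * z$2,
              \<nu> * \<nu>E * z$1 * (z$2 / (z$2 + \<gamma>s * z$4)) - \<delta>F * z$3,
              k * (z$2 + z$4) - \<delta>s * z$4 ]"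

definition filippov_map :: "('a::euclidean_space \<Rightarrow> 'a) \<Rightarrow> 'a set \<Rightarrow> 'a \<Rightarrow> 'a set" where
  "filippov_map X D x = (\<Inter>\<epsilon>\<in>{0<..}. \<Inter>N\<in>null_sets lebesgue.
       closure (convex hull (X ` ((cball x \<epsilon> \<inter> D) - N))))"

definition locally_lipschitz_on :: "real set \<Rightarrow> (real \<Rightarrow> 'a::metric_space) \<Rightarrow> bool" where
  "locally_lipschitz_on I z \<longleftrightarrow>
     (\<forall>t\<in>I. \<exists>u>0. \<exists>L. L-lipschitz_on (cball t u \<inter> I) z)"

definition filippov_solution :: "('a::euclidean_space \<Rightarrow> 'a) \<Rightarrow> 'a set \<Rightarrow> real set \<Rightarrow> (real \<Rightarrow> 'a) \<Rightarrow> bool" where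
  "filippov_solution X D I z \<longleftrightarrow>
     is_interval I \<and> (\<forall>t\<in>I. z t \<in> D) \<and> locally_lipschitz_on I z \<and>
     (AE t in lebesgue. t \<in> I \<longrightarrow>
        (\<exists>v. (z has_vector_derivative v) (at t within I) \<and> v \<in> filippov_map X D (z t)))"

definition positively_invariant :: "('a::euclidean_space \<Rightarrow> 'a) \<Rightarrow> 'a set \<Rightarrow> 'a set \<Rightarrow> bool" where
  "positively_invariant X D S \<longleftrightarrow>
     (\<forall>I z. filippov_solution X D I z \<and> 0 \<in> I \<and> z 0 \<in> S \<longrightarrow> (\<forall>t\<in>I. t \<ge> 0 \<longrightarrow> z t \<in> S))"

end

theory Submission
  imports Defs
begin

(* M(kappa) is the sublevel set {G <= 0} of G = max(Edot, M - kappa Ms, Mdot), a maximum of three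
   smooth functions of the state. Where G > 0, every function attaining the maximum grows along every
   Filippov velocity at rate at most C G: for M - kappa Ms this uses (delta_s - k) / k <= kappa, for Edot
   the upper bound on kappa, which keeps the female production below its losses wherever Edot > 0.
   Along a solution z, exp(-C t) G(z t) - dl t is Lipschitz and drops to the right of every time outside
   the null set where the Filippov inclusion may fail. Lipschitz maps send null sets to null sets, so
   almost every level could only be crossed upwards at such times, which is impossible; letting dl -> 0,
   G(z t) <= 0 persists. *)

section \<open>Lipschitz functions\<close>

lemma locally_lipschitz_on_imp_lipschitz_on_compact:
  fixes z :: "real \<Rightarrow> 'a::metric_space"
  assumes "locally_lipschitz_on I z" "compact S" "S \<subseteq> I"
  obtains L where "L-lipschitz_on S z"
proof -
  \<comment> \<open>\<open>z\<close> as a constant family over the parameter set \<open>{0}\<close>, to reuse the library's compactness argument\<close>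
  have "local_lipschitz {0::real} S (\<lambda>_. z)"
  proof (rule local_lipschitzI)
    fix t x assume "t \<in> {0::real}" "x \<in> S"
    then obtain u L where "u > 0" "L-lipschitz_on (cball x u \<inter> I) z"
      using assms(1,3) unfolding locally_lipschitz_on_def by blast
    then show "\<exists>u>0. \<exists>L. \<forall>s\<in>cball t u \<inter> {0::real}. L-lipschitz_on (cball x u \<inter> S) z"
      using assms(3) by (intro exI[of _ u] exI[of _ L]) (auto intro: lipschitz_on_subset)
  qed
  from local_lipschitz_compact_implies_lipschitz[OF this assms(2)] that show ?thesis
    by auto
qed

lemma lipschitz_on_mult_compact:
  fixes f g :: "'a::metric_space \<Rightarrow> real"
  assumes "compact U" "L-lipschitz_on U f" "M-lipschitz_on U g"
  obtains K where "K-lipschitz_on U (\<lambda>x. f x * g x)"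
proof -
  obtain A where A: "A > 0" "\<And>x. x \<in> U \<Longrightarrow> \<bar>f x\<bar> \<le> A"
    using compact_imp_bounded[OF compact_continuous_image[OF lipschitz_on_continuous_on[OF assms(2)] assms(1)]]
    by (auto simp: bounded_pos)
  obtain B where B: "B > 0" "\<And>x. x \<in> U \<Longrightarrow> \<bar>g x\<bar> \<le> B"
    using compact_imp_bounded[OF compact_continuous_image[OF lipschitz_on_continuous_on[OF assms(3)] assms(1)]]
    by (auto simp: bounded_pos)
  have "(A * M + B * L)-lipschitz_on U (\<lambda>x. f x * g x)"
  proof (rule lipschitz_onI)
    fix x y assume xy: "x \<in> U" "y \<in> U"
    have "f x * g x - f y * g y = f x * (g x - g y) + g y * (f x - f y)"
      by (simp add: algebra_simps)
    then have "dist (f x * g x) (f y * g y) \<le> \<bar>f x\<bar> * dist (g x) (g y) + \<bar>g y\<bar> * dist (f x) (f y)"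
      unfolding dist_real_def by (metis abs_mult abs_triangle_ineq)
    also have "\<dots> \<le> A * (M * dist x y) + B * (L * dist x y)"
      using xy A B lipschitz_onD[OF assms(2) xy] lipschitz_onD[OF assms(3) xy]
      by (intro add_mono mult_mono) auto
    finally show "dist (f x * g x) (f y * g y) \<le> (A * M + B * L) * dist x y"
      by (simp add: algebra_simps)
  next
    show "0 \<le> A * M + B * L"
      using A B lipschitz_on_nonneg[OF assms(2)] lipschitz_on_nonneg[OF assms(3)] by simp
  qed
  then show ?thesis by (rule that)
qed

lemma lipschitz_on_Max:
  fixes f :: "'i \<Rightarrow> 'a::metric_space \<Rightarrow> real"
  assumes "finite A" "A \<noteq> {}" "\<And>i. i \<in> A \<Longrightarrow> \<exists>L. L-lipschitz_on U (f i)"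
  obtains L where "L-lipschitz_on U (\<lambda>x. Max ((\<lambda>i. f i x) ` A))"
proof -
  obtain L where L: "\<And>i. i \<in> A \<Longrightarrow> (L i)-lipschitz_on U (f i)"
    using assms(3) by metis
  define L' where "L' = (\<Sum>i\<in>A. L i)"
  have "L i \<le> L'" if "i \<in> A" for i
    unfolding L'_def using assms(1) that L lipschitz_on_nonneg
    by (intro member_le_sum) auto
  then have L': "L'-lipschitz_on U (f i)" if "i \<in> A" for i
    using L that by (blast intro: lipschitz_on_mono)
  have half: "Max ((\<lambda>i. f i x) ` A) - Max ((\<lambda>i. f i y) ` A) \<le> L' * dist x y"
    if "x \<in> U" "y \<in> U" for x y
  proof -
    have "Max ((\<lambda>i. f i x) ` A) \<in> (\<lambda>i. f i x) ` A"
      using assms(1,2) by simp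
    then obtain i where i: "i \<in> A" "f i x = Max ((\<lambda>i. f i x) ` A)"
      by (metis imageE)
    have "f i y \<le> Max ((\<lambda>i. f i y) ` A)"
      using i(1) assms(1) by (intro Max_ge) auto
    moreover have "f i x - f i y \<le> L' * dist x y"
      using lipschitz_onD[OF L'[OF i(1)] that] by (simp add: dist_real_def)
    ultimately show ?thesis using i(2) by linarith
  qed
  have "L'-lipschitz_on U (\<lambda>x. Max ((\<lambda>i. f i x) ` A))"
  proof (rule lipschitz_onI)
    fix x y assume "x \<in> U" "y \<in> U"
    then show "dist (Max ((\<lambda>i. f i x) ` A)) (Max ((\<lambda>i. f i y) ` A)) \<le> L' * dist x y"
      using half[of x y] half[of y x] by (simp add: dist_real_def dist_commute abs_le_iff)
  next
    obtain i where "i \<in> A" using assms(2) by blast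
    then show "0 \<le> L'" using L' lipschitz_on_nonneg by blast
  qed
  then show ?thesis by (rule that)
qed

lemma lipschitz_on_if_continuous_derivative:
  fixes f :: "real \<Rightarrow> real"
  assumes "\<And>x. x \<in> {a..b} \<Longrightarrow> (f has_real_derivative f' x) (at x within {a..b})"
    and "continuous_on {a..b} f'"
  obtains L where "L-lipschitz_on {a..b} f"
proof -
  obtain B where B: "B > 0" "\<And>x. x \<in> {a..b} \<Longrightarrow> \<bar>f' x\<bar> \<le> B"
    using compact_imp_bounded[OF compact_continuous_image[OF assms(2) compact_Icc]]
    by (auto simp: bounded_pos)
  have "B-lipschitz_on {a..b} f"
  proof (rule lipschitz_onI)
    fix x y assume "x \<in> {a..b}" "y \<in> {a..b}"
    then show "dist (f x) (f y) \<le> B * dist x y"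
      using field_differentiable_bound[of "{a..b}" f f' B x y] assms(1) B(2)
      by (simp add: dist_norm convex_real_interval)
  qed (use B in simp)
  then show ?thesis by (rule that)
qed

lemma negligible_lipschitz_image:
  fixes f :: "'a::euclidean_space \<Rightarrow> 'b::euclidean_space"
  assumes "DIM('a) \<le> DIM('b)" "L-lipschitz_on S f" "N \<subseteq> S" "negligible N"
  shows "negligible (f ` N)"
proof (rule negligible_locally_Lipschitz_image[OF assms(1,4)])
  fix x assume "x \<in> N"
  then have "\<forall>y\<in>N \<inter> UNIV. norm (f y - f x) \<le> L * norm (y - x)"
    using lipschitz_onD[OF assms(2)] assms(3) by (auto simp: dist_norm)
  then show "\<exists>T B. open T \<and> x \<in> T \<and> (\<forall>y\<in>N \<inter> T. norm (f y - f x) \<le> B * norm (y - x))"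
    by blast
qed

section \<open>A comparison principle on the real line\<close>

lemma eventually_less_at_right:
  fixes f :: "real \<Rightarrow> real"
  assumes deriv: "(f has_real_derivative D) (at_right t)"
    and "f t \<le> y" and neg: "f t = y \<Longrightarrow> D < 0"
  shows "\<forall>\<^sub>F s in at_right t. f s < y"
proof (cases "f t = y")
  case True
  obtain d where "d > 0" and d: "\<And>h. 0 < h \<Longrightarrow> h < d \<Longrightarrow> f (t + h) < f t"
    using has_real_derivative_neg_dec_right[OF deriv neg[OF True]] by auto
  show ?thesis
    unfolding eventually_at_right_field
  proof (intro exI conjI allI impI)
    fix s assume "t < s" "s < t + d"
    then show "f s < y"
      using d[of "s - t"] True by simp
  qed (use \<open>d > 0\<close> in simp)
next
  case False
  have "(f \<longlongrightarrow> f t) (at_right t)"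
    using DERIV_continuous[OF deriv] by (simp add: continuous_within)
  then show ?thesis
    using False assms(2) by (intro order_tendstoD(2)) auto
qed

lemma eventually_Max_less_at_right:
  fixes f :: "'i \<Rightarrow> real \<Rightarrow> real"
  assumes "finite A" "A \<noteq> {}"
    and "\<And>i. i \<in> A \<Longrightarrow> (f i has_real_derivative D i) (at_right t)"
    and "\<And>i. i \<in> A \<Longrightarrow> f i t = Max ((\<lambda>i. f i t) ` A) \<Longrightarrow> D i < 0"
  shows "\<forall>\<^sub>F s in at_right t. Max ((\<lambda>i. f i s) ` A) < Max ((\<lambda>i. f i t) ` A)"
proof -
  have "\<forall>\<^sub>F s in at_right t. \<forall>i\<in>A. f i s < Max ((\<lambda>i. f i t) ` A)"
    using assms by (intro eventually_ball_finite ballI eventually_less_at_right) auto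
  then show ?thesis
    using assms(1,2) by (simp add: eventually_mono)
qed

lemma last_crossing:
  fixes h :: "real \<Rightarrow> real"
  assumes "a \<le> b" "continuous_on {a..b} h" "h a \<le> y" "y < h b"
  obtains t where "t \<in> {a..<b}" "h t = y" "\<And>s. s \<in> {t<..b} \<Longrightarrow> y < h s"
proof -
  define S where "S = {t\<in>{a..b}. h t \<le> y}"
  have "closed S"
    using continuous_closed_preimage[OF assms(2) closed_atLeastAtMost, of "{..y}"]
    unfolding S_def by (simp add: vimage_def Int_def conj_commute)
  moreover have "a \<in> S"
    using assms(1,3) by (simp add: S_def)
  moreover have "bdd_above S"
    unfolding S_def by (auto intro!: bdd_aboveI[of _ b])
  ultimately have tS: "Sup S \<in> S"
    using closed_contains_Sup by blast
  have above: "y < h s" if "s \<in> {Sup S<..b}" for s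
  proof (rule ccontr)
    assume "\<not> y < h s"
    then have "s \<in> S" using that tS by (auto simp: S_def)
    then show False using that cSup_upper[OF _ \<open>bdd_above S\<close>] by fastforce
  qed
  have lt: "Sup S < b"
    using tS assms(4) by (cases "Sup S = b") (auto simp: S_def)
  have "h (Sup S) = y"
  proof (rule ccontr)
    assume "h (Sup S) \<noteq> y"
    then have "h (Sup S) < y" using tS by (simp add: S_def)
    then obtain s where "Sup S \<le> s" "s \<le> b" "h s = y"
      using IVT'[of h "Sup S" y b] assms(2,4) lt tS
      by (force simp: S_def intro: continuous_on_subset)
    then show False using above[of s] \<open>h (Sup S) < y\<close> by force
  qed
  then show ?thesis
    using that tS lt above by (auto simp: S_def)
qed

lemma le_threshold_if_drops_right:
  fixes h :: "real \<Rightarrow> real"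
  assumes "a \<le> b" "continuous_on {a..b} h" "negligible (h ` N)" "h a \<le> c"
    and drop: "\<And>t. t \<in> {a..<b} \<Longrightarrow> t \<notin> N \<Longrightarrow> c < h t \<Longrightarrow> \<forall>\<^sub>F s in at_right t. h s < h t"
  shows "h b \<le> c"
proof (rule ccontr)
  assume "\<not> h b \<le> c"
  \<comment> \<open>a level outside \<open>h ` N\<close> makes its last crossing a point where \<open>drop\<close> applies\<close>
  then have "\<not> negligible {c<..<h b}"
    by (simp flip: box_real add: negligible_interval box_ne_empty)
  then obtain y where y: "y \<in> {c<..<h b}" "y \<notin> h ` N"
    using negligible_subset[OF assms(3)] by blast
  then obtain t where t: "t \<in> {a..<b}" "h t = y" and above: "\<And>s. s \<in> {t<..b} \<Longrightarrow> y < h s"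
    using last_crossing[OF assms(1,2), of y] assms(4) by auto
  have "t \<notin> N"
    using y(2) t(2) by auto
  then have "\<forall>\<^sub>F s in at_right t. h s < y \<and> s \<in> {t<..<b}"
    using drop[of t] t y eventually_at_right_real[of t b] by (auto intro: eventually_conj)
  then have "\<forall>\<^sub>F s in at_right t. False"
    by (rule eventually_mono) (use above in force)
  then show False
    by (simp add: eventually_False)
qed

lemma Max_scale_add_commute:
  fixes g :: "'i \<Rightarrow> real"
  assumes "finite A" "A \<noteq> {}" "0 \<le> c"
  shows "c * Max (g ` A) + d = Max ((\<lambda>i. c * g i + d) ` A)"
proof -
  have "mono (\<lambda>x. c * x + d)"
    using assms(3) by (intro monoI) (simp add: mult_left_mono)
  then show ?thesis
    using mono_Max_commute[of "\<lambda>x. c * x + d" "g ` A"] assms(1,2) by (simp add: image_image)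
qed

text \<open>The weight \<open>exp (- C * s)\<close> turns the growth bound \<open>D i \<le> C * G t\<close> of the active functions into a
  nonpositive right derivative of the weighted maximum; the drift \<open>- dl * s\<close> makes it negative.\<close>

lemma eventually_exp_weighted_Max_less:
  fixes g :: "'i \<Rightarrow> real \<Rightarrow> real" and A :: "'i set" and C dl t :: real
  defines "G \<equiv> \<lambda>s. Max ((\<lambda>i. g i s) ` A)"
  assumes A: "finite A" "A \<noteq> {}" and "0 < dl"
    and deriv: "\<And>i. i \<in> A \<Longrightarrow> (g i has_real_derivative D i) (at_right t)"
    and growth: "\<And>i. i \<in> A \<Longrightarrow> g i t = G t \<Longrightarrow> D i \<le> C * G t"
  shows "\<forall>\<^sub>F s in at_right t. exp (- C * s) * G s - dl * s < exp (- C * t) * G t - dl * t"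
proof -
  define f where "f i s = exp (- C * s) * g i s - dl * s" for i s
  have weighted: "exp (- C * s) * G s - dl * s = Max ((\<lambda>i. f i s) ` A)" for s
    using Max_scale_add_commute[OF A, of "exp (- C * s)" "\<lambda>i. g i s" "- dl * s"]
    by (simp add: G_def f_def)
  have "\<forall>\<^sub>F s in at_right t. Max ((\<lambda>i. f i s) ` A) < Max ((\<lambda>i. f i t) ` A)"
  proof (rule eventually_Max_less_at_right[OF A])
    fix i assume i: "i \<in> A"
    show "(f i has_real_derivative exp (- C * t) * (D i - C * g i t) - dl) (at_right t)"
      unfolding f_def by (auto intro!: derivative_eq_intros deriv[OF i] simp: algebra_simps)
    assume "f i t = Max ((\<lambda>i. f i t) ` A)"
    then have "f i t = exp (- C * t) * G t - dl * t"
      by (simp only: weighted)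
    then have "g i t = G t"
      by (simp add: f_def)
    then show "exp (- C * t) * (D i - C * g i t) - dl < 0"
      using growth[OF i] \<open>0 < dl\<close> mult_nonneg_nonpos[of "exp (- C * t)" "D i - C * G t"] by simp
  qed
  then show ?thesis
    by (simp only: weighted)
qed

lemma lipschitz_on_exp_weighted_Max:
  fixes g :: "'i \<Rightarrow> real \<Rightarrow> real" and A :: "'i set" and a b C dl :: real
  assumes A: "finite A" "A \<noteq> {}" and lip: "\<And>i. i \<in> A \<Longrightarrow> \<exists>L. L-lipschitz_on {a..b} (g i)"
  obtains L where "L-lipschitz_on {a..b} (\<lambda>s. exp (- C * s) * Max ((\<lambda>i. g i s) ` A) - dl * s)"
proof -
  have "((\<lambda>s. exp (- C * s)) has_real_derivative - C * exp (- C * s)) (at s within {a..b})" for s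
    by (auto intro!: derivative_eq_intros)
  moreover have "continuous_on {a..b} (\<lambda>s. - C * exp (- C * s))"
    by (intro continuous_intros)
  ultimately obtain Lw where Lw: "Lw-lipschitz_on {a..b} (\<lambda>s. exp (- C * s))"
    by (rule lipschitz_on_if_continuous_derivative)
  have "\<exists>L. L-lipschitz_on {a..b} (\<lambda>s. exp (- C * s) * g i s - dl * s)" if i: "i \<in> A" for i
  proof -
    obtain L where "L-lipschitz_on {a..b} (g i)"
      using lip[OF i] by blast
    then obtain K where "K-lipschitz_on {a..b} (\<lambda>s. exp (- C * s) * g i s)"
      by (rule lipschitz_on_mult_compact[OF compact_Icc Lw])
    then have "(K + \<bar>dl\<bar> * 1)-lipschitz_on {a..b} (\<lambda>s. exp (- C * s) * g i s - dl * s)"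
      by (intro lipschitz_on_diff lipschitz_on_cmult_real lipschitz_on_id)
    then show ?thesis by blast
  qed
  then obtain L where "L-lipschitz_on {a..b} (\<lambda>s. Max ((\<lambda>i. exp (- C * s) * g i s - dl * s) ` A))"
    by (rule lipschitz_on_Max[OF A])
  moreover have "exp (- C * s) * Max ((\<lambda>i. g i s) ` A) - dl * s
      = Max ((\<lambda>i. exp (- C * s) * g i s - dl * s) ` A)" for s
    using Max_scale_add_commute[OF A, of "exp (- C * s)" "\<lambda>i. g i s" "- dl * s"] by simp
  ultimately show ?thesis
    using that by simp
qed

lemma exp_weighted_Max_bound:
  fixes g :: "'i \<Rightarrow> real \<Rightarrow> real" and A :: "'i set" and a b C dl :: real
  defines "G \<equiv> \<lambda>s. Max ((\<lambda>i. g i s) ` A)"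
  assumes A: "finite A" "A \<noteq> {}" and "a \<le> b" "negligible N" "dl > 0"
    and lip: "\<And>i. i \<in> A \<Longrightarrow> \<exists>L. L-lipschitz_on {a..b} (g i)"
    and start: "G a \<le> 0"
    and growth: "\<And>t. t \<in> {a..<b} \<Longrightarrow> t \<notin> N \<Longrightarrow> 0 < G t \<Longrightarrow> \<forall>i\<in>A. \<exists>D.
       (g i has_real_derivative D) (at_right t) \<and> (g i t = G t \<longrightarrow> D \<le> C * G t)"
  shows "exp (- C * b) * G b \<le> dl * (b - a)"
proof -
  define h where "h s = exp (- C * s) * G s - dl * s" for s
  obtain L where lip_h: "L-lipschitz_on {a..b} h"
    unfolding h_def G_def by (rule lipschitz_on_exp_weighted_Max[OF A lip])
  have "h b \<le> - dl * a"
  proof (rule le_threshold_if_drops_right[where h = h and N = "N \<inter> {a..b}"])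
    show "continuous_on {a..b} h"
      using lip_h by (rule lipschitz_on_continuous_on)
    show "negligible (h ` (N \<inter> {a..b}))"
      using negligible_lipschitz_image[OF _ lip_h Int_lower2 negligible_subset[OF \<open>negligible N\<close> Int_lower1]]
      by simp
  next
    fix t assume t: "t \<in> {a..<b}" "t \<notin> N \<inter> {a..b}" and "- dl * a < h t"
    then have "dl * (t - a) < exp (- C * t) * G t"
      by (simp add: h_def algebra_simps)
    moreover have "0 \<le> dl * (t - a)"
      using t \<open>dl > 0\<close> by simp
    ultimately have "0 < exp (- C * t) * G t"
      by linarith
    then have "0 < G t"
      by (simp add: zero_less_mult_iff)
    then have "\<forall>i\<in>A. \<exists>D. (g i has_real_derivative D) (at_right t) \<and> (g i t = G t \<longrightarrow> D \<le> C * G t)"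
      using growth[of t] t by auto
    then obtain D where D: "\<And>i. i \<in> A \<Longrightarrow> (g i has_real_derivative D i) (at_right t)"
        "\<And>i. i \<in> A \<Longrightarrow> g i t = G t \<Longrightarrow> D i \<le> C * G t"
      by (metis bchoice)
    show "\<forall>\<^sub>F s in at_right t. h s < h t"
      unfolding h_def G_def by (rule eventually_exp_weighted_Max_less[OF A \<open>0 < dl\<close> D(1) D(2)[unfolded G_def]])
  qed (use \<open>a \<le> b\<close> start in \<open>auto simp: h_def mult_nonneg_nonpos\<close>)
  then show ?thesis
    by (simp add: h_def algebra_simps)
qed

lemma Max_nonpos_persists:
  fixes g :: "'i \<Rightarrow> real \<Rightarrow> real" and A :: "'i set" and a b C :: real
  defines "G \<equiv> \<lambda>s. Max ((\<lambda>i. g i s) ` A)"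
  assumes A: "finite A" "A \<noteq> {}" and "a \<le> b" "negligible N"
    and lip: "\<And>i. i \<in> A \<Longrightarrow> \<exists>L. L-lipschitz_on {a..b} (g i)"
    and start: "G a \<le> 0"
    and growth: "\<And>t. t \<in> {a..<b} \<Longrightarrow> t \<notin> N \<Longrightarrow> 0 < G t \<Longrightarrow> \<forall>i\<in>A. \<exists>D.
       (g i has_real_derivative D) (at_right t) \<and> (g i t = G t \<longrightarrow> D \<le> C * G t)"
  shows "G b \<le> 0"
proof -
  have "exp (- C * b) * G b \<le> 0 + e" if "e > 0" for e
  proof -
    have "exp (- C * b) * G b \<le> e / (b - a + 1) * (b - a)"
      unfolding G_def using assms that
      by (intro exp_weighted_Max_bound[where N = N and C = C]) (auto simp: G_def)
    also have "\<dots> \<le> e"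
      using that \<open>a \<le> b\<close> by (simp add: field_simps)
    finally show ?thesis by simp
  qed
  then have "exp (- C * b) * G b \<le> 0"
    by (rule field_le_epsilon)
  then show ?thesis
    by (simp add: mult_le_0_iff)
qed

section \<open>A barrier criterion for Filippov solutions\<close>

lemma has_real_derivative_compose_vector:
  assumes "(z has_vector_derivative v) (at t within T)" "(\<phi> has_derivative \<phi>') (at (z t))"
  shows "((\<lambda>s. \<phi> (z s)) has_real_derivative \<phi>' v) (at t within T)"
proof -
  have "((\<phi> \<circ> z) has_derivative (\<phi>' \<circ> (\<lambda>h. h *\<^sub>R v))) (at t within T)"
    using assms(1) has_derivative_at_withinI[OF assms(2)]
    by (intro diff_chain_within) (simp_all add: has_vector_derivative_def)
  moreover have "(\<phi>' \<circ> (\<lambda>h. h *\<^sub>R v)) = (\<lambda>h. \<phi>' v * h)"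
    using linear.scaleR[OF bounded_linear.linear[OF has_derivative_bounded_linear[OF assms(2)]]]
    by (auto simp: mult.commute)
  ultimately show ?thesis
    by (simp add: has_field_derivative_def o_def)
qed

lemma has_real_derivative_at_right_compose:
  assumes "(z has_vector_derivative v) (at t within I)" "{t..b} \<subseteq> I" "t < b"
    and "(\<phi> has_derivative \<phi>') (at (z t))"
  shows "((\<lambda>s. \<phi> (z s)) has_real_derivative \<phi>' v) (at_right t)"
proof -
  have "(z has_vector_derivative v) (at t within {t..b})"
    using assms(1,2) by (rule has_vector_derivative_within_subset)
  then have "((\<lambda>s. \<phi> (z s)) has_real_derivative \<phi>' v) (at t within {t..b})"
    using assms(4) by (rule has_real_derivative_compose_vector[where z = z and t = t])
  then show ?thesis
    using assms(3) by (simp add: at_within_Icc_at_right)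
qed

lemma filippov_map_linear_le:
  fixes X :: "'a::euclidean_space \<Rightarrow> 'a" and l L :: "'a \<Rightarrow> real"
  assumes v: "v \<in> filippov_map X D w" and "linear l"
    and bound: "\<And>y. y \<in> D \<Longrightarrow> l (X y) \<le> L y" and "isCont L w"
  shows "l v \<le> L w"
proof (rule field_le_epsilon)
  fix e :: real assume "0 < e"
  then obtain d where "d > 0" and d: "\<And>y. dist y w < d \<Longrightarrow> dist (L y) (L w) < e"
    using \<open>isCont L w\<close> unfolding continuous_at_eps_delta by blast
  define H where "H = l -` {..L w + e}"
  have "closed H"
    unfolding H_def using \<open>linear l\<close>
    by (intro continuous_closed_vimage closed_atMost linear_continuous_at) (simp add: linear_conv_bounded_linear)
  have "convex H"
    unfolding H_def using \<open>linear l\<close> convex_real_interval(2) by (rule convex_linear_vimage)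
  have "X ` (cball w (d/2) \<inter> D) \<subseteq> H"
  proof
    fix x assume "x \<in> X ` (cball w (d/2) \<inter> D)"
    then obtain y where y: "y \<in> D" "dist w y \<le> d/2" "x = X y"
      by auto
    then have "L y < L w + e"
      using d[of y] \<open>d > 0\<close> by (simp add: dist_commute dist_real_def abs_less_iff)
    then show "x \<in> H"
      using bound[OF y(1)] y(3) unfolding H_def by simp
  qed
  then have "closure (convex hull (X ` (cball w (d/2) \<inter> D))) \<subseteq> H"
    using \<open>closed H\<close> \<open>convex H\<close> by (simp add: closure_minimal hull_minimal)
  moreover have "v \<in> (\<Inter>N\<in>null_sets lebesgue. closure (convex hull (X ` (cball w (d/2) \<inter> D - N))))"
    using INT_D[OF v[unfolded filippov_map_def], of "d/2"] \<open>d > 0\<close> by simp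
  then have "v \<in> closure (convex hull (X ` (cball w (d/2) \<inter> D)))"
    by (metis (no_types, lifting) INT_D Diff_empty null_sets.empty_sets)
  ultimately show "l v \<le> L w + e"
    unfolding H_def by auto
qed

lemma barrier_growth_along_solution:
  fixes X :: "'a::euclidean_space \<Rightarrow> 'a" and \<Phi> :: "('a \<Rightarrow> real) set" and C :: real
  defines "G \<equiv> \<lambda>w. Max ((\<lambda>\<phi>. \<phi> w) ` \<Phi>)"
  assumes growth: "\<And>\<phi> w v. \<phi> \<in> \<Phi> \<Longrightarrow> w \<in> D \<Longrightarrow> v \<in> filippov_map X D w \<Longrightarrow> 0 < G w \<Longrightarrow>
       \<exists>\<phi>'. (\<phi> has_derivative \<phi>') (at w) \<and> (\<phi> w = G w \<longrightarrow> \<phi>' v \<le> C * G w)"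
    and z: "(z has_vector_derivative v) (at t within I)" "v \<in> filippov_map X D (z t)" "z t \<in> D"
    and "{t..b} \<subseteq> I" "t < b" "0 < G (z t)"
  shows "\<forall>\<phi>\<in>\<Phi>. \<exists>D'. ((\<lambda>s. \<phi> (z s)) has_real_derivative D') (at_right t) \<and>
    (\<phi> (z t) = G (z t) \<longrightarrow> D' \<le> C * G (z t))"
proof
  fix \<phi> assume "\<phi> \<in> \<Phi>"
  then obtain \<phi>' where \<phi>': "(\<phi> has_derivative \<phi>') (at (z t))" "\<phi> (z t) = G (z t) \<longrightarrow> \<phi>' v \<le> C * G (z t)"
    using growth[OF _ z(3,2)] \<open>0 < G (z t)\<close> by blast
  have "((\<lambda>s. \<phi> (z s)) has_real_derivative \<phi>' v) (at_right t)"
    using z(1) \<open>{t..b} \<subseteq> I\<close> \<open>t < b\<close> \<phi>'(1) by (rule has_real_derivative_at_right_compose)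
  then show "\<exists>D'. ((\<lambda>s. \<phi> (z s)) has_real_derivative D') (at_right t) \<and> (\<phi> (z t) = G (z t) \<longrightarrow> D' \<le> C * G (z t))"
    using \<phi>'(2) by blast
qed

theorem positively_invariant_if_barrier:
  fixes X :: "'a::euclidean_space \<Rightarrow> 'a" and \<Phi> :: "('a \<Rightarrow> real) set" and C :: real
  defines "G \<equiv> \<lambda>w. Max ((\<lambda>\<phi>. \<phi> w) ` \<Phi>)"
  assumes \<Phi>: "finite \<Phi>" "\<Phi> \<noteq> {}"
    and lip: "\<And>\<phi> S. \<phi> \<in> \<Phi> \<Longrightarrow> compact S \<Longrightarrow> S \<subseteq> D \<Longrightarrow> \<exists>L. L-lipschitz_on S \<phi>"
    and growth: "\<And>\<phi> w v. \<phi> \<in> \<Phi> \<Longrightarrow> w \<in> D \<Longrightarrow> v \<in> filippov_map X D w \<Longrightarrow> 0 < G w \<Longrightarrow>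
       \<exists>\<phi>'. (\<phi> has_derivative \<phi>') (at w) \<and> (\<phi> w = G w \<longrightarrow> \<phi>' v \<le> C * G w)"
  shows "positively_invariant X D {w \<in> D. G w \<le> 0}"
  unfolding positively_invariant_def
proof (intro allI impI ballI)
  fix I z t1
  assume "filippov_solution X D I z \<and> 0 \<in> I \<and> z 0 \<in> {w \<in> D. G w \<le> 0}" and t1: "t1 \<in> I" "0 \<le> t1"
  then have "filippov_solution X D I z" "0 \<in> I" and start: "G (z 0) \<le> 0"
    by auto
  then have "is_interval I" and zD: "\<And>t. t \<in> I \<Longrightarrow> z t \<in> D" and "locally_lipschitz_on I z"
    and ae: "AE t in lebesgue. t \<in> I \<longrightarrow>
      (\<exists>v. (z has_vector_derivative v) (at t within I) \<and> v \<in> filippov_map X D (z t))"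
    unfolding filippov_solution_def by blast+
  have J: "{0..t1} \<subseteq> I"
    using mem_is_interval_1_I[OF \<open>is_interval I\<close> \<open>0 \<in> I\<close> t1(1)] by auto
  obtain Lz where Lz: "Lz-lipschitz_on {0..t1} z"
    using locally_lipschitz_on_imp_lipschitz_on_compact[OF \<open>locally_lipschitz_on I z\<close> compact_Icc J] .
  obtain N where "N \<in> null_sets lebesgue" and N: "\<And>t. t \<notin> N \<Longrightarrow> t \<in> I \<Longrightarrow>
      \<exists>v. (z has_vector_derivative v) (at t within I) \<and> v \<in> filippov_map X D (z t)"
    using AE_E3[OF ae] by auto
  have "G (z t1) \<le> 0"
    unfolding G_def
  proof (rule Max_nonpos_persists[OF \<Phi> t1(2), where N = N and C = C])
    show "negligible N"
      using \<open>N \<in> null_sets lebesgue\<close> by (simp add: negligible_iff_null_sets)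
    show "Max ((\<lambda>\<phi>. \<phi> (z 0)) ` \<Phi>) \<le> 0"
      using start by (simp add: G_def)
  next
    fix \<phi> assume "\<phi> \<in> \<Phi>"
    have "compact (z ` {0..t1})" "z ` {0..t1} \<subseteq> D"
      using compact_continuous_image[OF lipschitz_on_continuous_on[OF Lz] compact_Icc] J zD by auto
    then obtain L where "L-lipschitz_on (z ` {0..t1}) \<phi>"
      using lip[OF \<open>\<phi> \<in> \<Phi>\<close>] by blast
    then show "\<exists>L. L-lipschitz_on {0..t1} (\<lambda>s. \<phi> (z s))"
      using lipschitz_on_compose2[OF Lz] by blast
  next
    fix t assume t: "t \<in> {0..<t1}" "t \<notin> N" and "0 < Max ((\<lambda>\<phi>. \<phi> (z t)) ` \<Phi>)"
    moreover obtain v where "(z has_vector_derivative v) (at t within I)" "v \<in> filippov_map X D (z t)"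
      using N J t by force
    moreover have "z t \<in> D"
      using t J by (intro zD) auto
    moreover have "{t..t1} \<subseteq> I"
      using t J by auto
    ultimately show "\<forall>\<phi>\<in>\<Phi>. \<exists>D. ((\<lambda>s. \<phi> (z s)) has_real_derivative D) (at_right t) \<and>
        (\<phi> (z t) = Max ((\<lambda>\<phi>. \<phi> (z t)) ` \<Phi>) \<longrightarrow> D \<le> C * Max ((\<lambda>\<phi>. \<phi> (z t)) ` \<Phi>))"
      using barrier_growth_along_solution[of \<Phi> D X C, OF growth[unfolded G_def]] by (auto simp: G_def)
  qed
  then show "z t1 \<in> {w \<in> D. G w \<le> 0}"
    using zD[OF t1(1)] by simp
qed

section \<open>The sterile male release model\<close>

lemma fraction_le_threshold_plus_excess:
  fixes M S \<kappa> \<gamma> :: real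
  assumes "0 < M + \<gamma> * S" "0 < \<kappa>" "0 < \<gamma>"
  shows "M / (M + \<gamma> * S) \<le> \<kappa> / (\<kappa> + \<gamma>) + \<gamma> / (\<kappa> + \<gamma>) * (max 0 (M - \<kappa> * S) / (M + \<gamma> * S))"
proof -
  define D p where "D = M + \<gamma> * S" and "p = max 0 (M - \<kappa> * S)"
  have "\<gamma> * (M - \<kappa> * S) \<le> \<gamma> * p"
    using assms(3) unfolding p_def by (intro mult_left_mono) auto
  then have "M * (\<kappa> + \<gamma>) \<le> \<kappa> * D + \<gamma> * p"
    unfolding D_def by (simp add: algebra_simps)
  then have "M \<le> (\<kappa> * D + \<gamma> * p) / (\<kappa> + \<gamma>)"
    using add_pos_pos[OF assms(2,3)] by (simp add: le_divide_eq)
  also have "\<dots> = \<kappa> / (\<kappa> + \<gamma>) * D + \<gamma> / (\<kappa> + \<gamma>) * p"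
    by (simp add: add_divide_distrib)
  also have "\<dots> = (\<kappa> / (\<kappa> + \<gamma>) + \<gamma> / (\<kappa> + \<gamma>) * (p / D)) * D"
  proof -
    have "\<gamma> / (\<kappa> + \<gamma>) * (p / D) * D = \<gamma> / (\<kappa> + \<gamma>) * p"
      using assms(1) by (simp add: D_def)
    then show ?thesis
      by (simp only: distrib_right)
  qed
  finally show ?thesis
    using assms(1) unfolding D_def p_def by (simp add: pos_divide_le_eq)
qed

lemma weighted_fraction_le_threshold_plus_excess:
  fixes E M S \<kappa> \<gamma> r c m :: real
  assumes "0 \<le> E" "0 \<le> M" "0 \<le> S" "0 < \<kappa>" "0 < \<gamma>" "0 < r" "0 \<le> c" "0 \<le> m"
    and E: "r * E \<le> c * M + m"
  shows "E * (M / (M + \<gamma> * S)) \<le> \<kappa> / (\<kappa> + \<gamma>) * E + \<gamma> / ((\<kappa> + \<gamma>) * r) * (c * max 0 (M - \<kappa> * S) + m)"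
proof (cases "M + \<gamma> * S = 0")
  case True
  then show ?thesis
    using assms by (simp add: add_nonneg_eq_0_iff)
next
  case False
  define D p where "D = M + \<gamma> * S" and "p = max 0 (M - \<kappa> * S)"
  have "0 \<le> \<gamma> * S" "0 \<le> \<kappa> * S"
    using assms by simp_all
  then have "0 < D" "M \<le> D" "0 \<le> p" "p \<le> M"
    using False assms(2) unfolding D_def p_def by auto
  have excess: "E * (p / D) \<le> (c * p + m) / r"
  proof -
    have "r * E * p \<le> (c * M + m) * p"
      using E \<open>0 \<le> p\<close> by (rule mult_right_mono)
    also have "\<dots> \<le> (c * p + m) * D"
    proof -
      have "c * p * M \<le> c * p * D"
        using \<open>M \<le> D\<close> \<open>0 \<le> p\<close> assms(7) by (intro mult_left_mono) auto
      moreover have "m * p \<le> m * D"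
        using \<open>p \<le> M\<close> \<open>M \<le> D\<close> assms(8) by (intro mult_left_mono) auto
      ultimately show ?thesis
        by (simp add: algebra_simps)
    qed
    finally show ?thesis
      using \<open>0 < D\<close> \<open>0 < r\<close> by (simp add: field_simps)
  qed
  have "E * (M / D) \<le> \<kappa> / (\<kappa> + \<gamma>) * E + \<gamma> / (\<kappa> + \<gamma>) * (E * (p / D))"
    using mult_left_mono[OF fraction_le_threshold_plus_excess[OF \<open>0 < D\<close>[unfolded D_def] assms(4,5)] assms(1)]
    unfolding D_def p_def by (simp add: algebra_simps)
  also have "\<dots> \<le> \<kappa> / (\<kappa> + \<gamma>) * E + \<gamma> / (\<kappa> + \<gamma>) * ((c * p + m) / r)"
    using excess assms(4,5) by (intro add_left_mono mult_left_mono) auto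
  finally show ?thesis
    unfolding D_def p_def by simp
qed

locale mosquito_release =
  fixes \<beta>E \<nu>E \<delta>E \<delta>M \<delta>F \<delta>s K \<nu> \<gamma>s k \<kappa> :: real
  assumes pos: "0 < \<beta>E" "0 < \<nu>E" "0 < \<delta>E" "0 < \<delta>M" "0 < \<delta>F" "0 < K" "0 < \<gamma>s" "0 < \<kappa>"
    and \<nu>: "0 < \<nu>" "\<nu> < 1"
    and k: "k < \<delta>s" "\<delta>s - k \<le> \<kappa> * k"
    and \<kappa>_le: "\<kappa> * (\<beta>E * \<nu> * \<nu>E - \<delta>F * (\<nu>E + \<delta>E)) \<le> \<gamma>s * \<delta>F * (\<nu>E + \<delta>E)"
begin

abbreviation X :: "real^4 \<Rightarrow> real^4" where
  "X \<equiv> Xcl \<beta>E \<nu>E \<delta>E \<delta>M \<delta>F \<delta>s K \<nu> \<gamma>s k"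

definition egg_rate :: "real^4 \<Rightarrow> real" where
  "egg_rate w = \<beta>E * w$3 * (1 - w$1 / K) - (\<nu>E + \<delta>E) * w$1"

definition male_rate :: "real^4 \<Rightarrow> real" where
  "male_rate w = (1 - \<nu>) * \<nu>E * w$1 - \<delta>M * w$2"

definition male_excess :: "real^4 \<Rightarrow> real" where
  "male_excess w = w$2 - \<kappa> * w$4"

definition constraints :: "(real^4 \<Rightarrow> real) set" where
  "constraints = {egg_rate, male_excess, male_rate}"

definition violation :: "real^4 \<Rightarrow> real" where
  "violation w = Max ((\<lambda>\<phi>. \<phi> w) ` constraints)"

definition q :: real where
  "q = \<nu> * \<gamma>s / ((\<kappa> + \<gamma>s) * (1 - \<nu>))"

definition growth_bound :: real where
  "growth_bound = 1 + (1 - \<nu>) * \<nu>E + \<beta>E * q * (\<delta>M + 1)"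

lemma violation_eq: "violation w = max (egg_rate w) (max (male_excess w) (male_rate w))"
  by (simp add: violation_def constraints_def)

lemma Mset_eq: "Mset \<beta>E \<nu>E \<delta>E K \<nu> \<delta>M \<kappa> = {w \<in> Dprime. violation w \<le> 0}"
  by (auto simp: Mset_def T1_def T2_def T3_def violation_eq egg_rate_def male_excess_def male_rate_def)

lemma X_nth:
  "X w $ 1 = egg_rate w" "X w $ 2 = male_rate w"
  "X w $ 3 = \<nu> * \<nu>E * w$1 * (w$2 / (w$2 + \<gamma>s * w$4)) - \<delta>F * w$3"
  "X w $ 4 = k * (w$2 + w$4) - \<delta>s * w$4"
  by (simp_all add: Xcl_def vector_def egg_rate_def male_rate_def)

lemma Dprime_nth_nonneg: "w \<in> Dprime \<Longrightarrow> 0 \<le> w $ i"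
  by (simp add: Dprime_def)

lemma q_nonneg: "0 \<le> q"
  using pos \<nu> by (simp add: q_def)

lemma q_eq: "\<nu> * \<nu>E * (\<gamma>s / ((\<kappa> + \<gamma>s) * ((1 - \<nu>) * \<nu>E))) = q"
proof -
  define \<rho> where "\<rho> = 1 - \<nu>"
  have "(\<kappa> + \<gamma>s) * (\<rho> * \<nu>E) \<noteq> 0" "(\<kappa> + \<gamma>s) * \<rho> \<noteq> 0"
    using pos \<nu> add_pos_pos[of \<kappa> \<gamma>s] by (auto simp: \<rho>_def)
  then have "\<nu> * \<nu>E * (\<gamma>s / ((\<kappa> + \<gamma>s) * (\<rho> * \<nu>E))) = \<nu> * \<gamma>s / ((\<kappa> + \<gamma>s) * \<rho>)"
    using pos by (simp add: field_simps)
  then show ?thesis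
    by (simp add: q_def \<rho>_def)
qed

lemma linear_male_rate: "linear male_rate"
  by (rule linearI) (simp_all add: male_rate_def algebra_simps)

lemma linear_male_excess: "linear male_excess"
  by (rule linearI) (simp_all add: male_excess_def algebra_simps)

lemma isCont_violation: "isCont violation w"
  unfolding violation_eq egg_rate_def male_excess_def male_rate_def
  by (intro continuous_intros) (use pos in simp)

text \<open>A continuous majorant of \<open>X y $ 3\<close>: the mating fraction \<open>M / (M + \<gamma>s * Ms)\<close> jumps at
  \<open>M = Ms = 0\<close>, but exceeds \<open>\<kappa> / (\<kappa> + \<gamma>s)\<close> only where the other two constraints are violated.\<close>

lemma female_rate_le:
  assumes "y \<in> Dprime"
  shows "X y $ 3 \<le> \<nu> * \<nu>E * \<kappa> / (\<kappa> + \<gamma>s) * y$1 - \<delta>F * y$3 + q * (\<delta>M + 1) * max 0 (violation y)"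
proof -
  define Z where "Z = \<delta>M * max 0 (y$2 - \<kappa> * y$4) + max 0 (male_rate y)"
  have "(1 - \<nu>) * \<nu>E * y$1 \<le> \<delta>M * y$2 + max 0 (male_rate y)"
    by (simp add: male_rate_def)
  then have frac: "y$1 * (y$2 / (y$2 + \<gamma>s * y$4))
      \<le> \<kappa> / (\<kappa> + \<gamma>s) * y$1 + \<gamma>s / ((\<kappa> + \<gamma>s) * ((1 - \<nu>) * \<nu>E)) * Z"
    unfolding Z_def using Dprime_nth_nonneg[OF assms] pos \<nu>
    by (intro weighted_fraction_le_threshold_plus_excess) auto
  have Z: "Z \<le> (\<delta>M + 1) * max 0 (violation y)"
  proof -
    have "max 0 (y$2 - \<kappa> * y$4) \<le> max 0 (violation y)" "max 0 (male_rate y) \<le> max 0 (violation y)"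
      by (auto simp: violation_eq male_excess_def)
    then show ?thesis
      unfolding Z_def using pos by (simp add: distrib_right add_mono)
  qed
  have "\<nu> * \<nu>E * (y$1 * (y$2 / (y$2 + \<gamma>s * y$4)))
      \<le> \<nu> * \<nu>E * (\<kappa> / (\<kappa> + \<gamma>s) * y$1 + \<gamma>s / ((\<kappa> + \<gamma>s) * ((1 - \<nu>) * \<nu>E)) * Z)"
    using frac pos \<nu> by (intro mult_left_mono) auto
  also have "\<dots> = \<nu> * \<nu>E * \<kappa> / (\<kappa> + \<gamma>s) * y$1 + q * Z"
    by (simp add: distrib_left flip: q_eq)
  also have "\<dots> \<le> \<nu> * \<nu>E * \<kappa> / (\<kappa> + \<gamma>s) * y$1 + q * ((\<delta>M + 1) * max 0 (violation y))"
    using Z q_nonneg by (intro add_left_mono mult_left_mono)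
  finally show ?thesis
    by (simp add: X_nth algebra_simps)
qed

lemma egg_rate_pos_imp:
  assumes "w \<in> Dprime" "0 < egg_rate w"
  shows "w$1 < K" "\<nu> * \<nu>E * \<kappa> / (\<kappa> + \<gamma>s) * w$1 \<le> \<delta>F * w$3"
proof -
  have E: "0 \<le> w$1" and F: "0 \<le> w$3"
    using Dprime_nth_nonneg[OF assms(1)] by auto
  have "0 \<le> (\<nu>E + \<delta>E) * w$1"
    using pos E by simp
  then have hatch: "0 < \<beta>E * w$3 * (1 - w$1 / K)"
    using assms(2) unfolding egg_rate_def by linarith
  moreover have "0 \<le> \<beta>E * w$3"
    using pos F by simp
  ultimately have "0 < 1 - w$1 / K"
    using zero_less_mult_iff[of "\<beta>E * w$3" "1 - w$1 / K"] by linarith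
  then show "w$1 < K"
    using pos by simp
  have "\<beta>E * w$3 * (1 - w$1 / K) \<le> \<beta>E * w$3"
    using pos E F by (simp add: algebra_simps)
  then have EF: "(\<nu>E + \<delta>E) * w$1 \<le> \<beta>E * w$3"
    using assms(2) unfolding egg_rate_def by linarith
  have "\<beta>E * (\<nu> * \<nu>E * \<kappa> * w$1) = (\<beta>E * \<nu> * \<nu>E * \<kappa>) * w$1"
    by simp
  also have "\<dots> \<le> (\<delta>F * (\<nu>E + \<delta>E) * (\<kappa> + \<gamma>s)) * w$1"
    using \<kappa>_le E by (intro mult_right_mono) (simp_all add: algebra_simps)
  also have "\<dots> = \<delta>F * (\<kappa> + \<gamma>s) * ((\<nu>E + \<delta>E) * w$1)"
    by simp
  also have "\<dots> \<le> \<delta>F * (\<kappa> + \<gamma>s) * (\<beta>E * w$3)"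
    using EF pos by (intro mult_left_mono) auto
  also have "\<dots> = \<beta>E * (\<delta>F * (\<kappa> + \<gamma>s) * w$3)"
    by simp
  finally have "\<nu> * \<nu>E * \<kappa> * w$1 \<le> \<delta>F * (\<kappa> + \<gamma>s) * w$3"
    using pos(1) by (rule mult_le_cancel_left_pos[THEN iffD1, rotated])
  then show "\<nu> * \<nu>E * \<kappa> / (\<kappa> + \<gamma>s) * w$1 \<le> \<delta>F * w$3"
    using pos by (simp add: field_simps)
qed

definition egg_rate_deriv :: "real^4 \<Rightarrow> real^4 \<Rightarrow> real" where
  "egg_rate_deriv w v = \<beta>E * (1 - w$1 / K) * v$3 - (\<beta>E * w$3 / K + (\<nu>E + \<delta>E)) * v$1"

lemma egg_rate_has_derivative: "(egg_rate has_derivative egg_rate_deriv w) (at w)"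
proof -
  have nth: "((\<lambda>w. w $ i) has_derivative (\<lambda>v. v $ i)) (at w)" for i :: 4
    by (rule bounded_linear_imp_has_derivative) (rule bounded_linear_vec_nth)
  have "egg_rate = (\<lambda>w. \<beta>E * w$3 * (1 - inverse K * w$1) - (\<nu>E + \<delta>E) * w$1)"
    by (simp add: egg_rate_def[abs_def] divide_inverse mult.commute)
  then show ?thesis
    unfolding egg_rate_deriv_def[abs_def]
    by (simp only:) (rule derivative_eq_intros nth refl | simp add: fun_eq_iff algebra_simps divide_inverse)+
qed

lemma lipschitz_constraint:
  assumes "\<phi> \<in> constraints" "compact S"
  shows "\<exists>L. L-lipschitz_on S \<phi>"
proof -
  have nth: "1-lipschitz_on S (\<lambda>w. w $ i)" for i :: 4
    by (rule lipschitz_onI) (simp_all add: dist_vec_nth_le)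
  have lin: "\<exists>L. L-lipschitz_on S \<phi>" if "linear \<phi>" for \<phi> :: "real^4 \<Rightarrow> real"
    using bounded_linear.lipschitz_boundE[of \<phi>] that by (metis linear_conv_bounded_linear)
  have "(0 + \<bar>1 / K\<bar> * 1)-lipschitz_on S (\<lambda>w. 1 - 1 / K * w$1)"
    by (intro lipschitz_on_diff lipschitz_on_constant lipschitz_on_cmult_real nth)
  then have "(\<bar>1 / K\<bar>)-lipschitz_on S (\<lambda>w. 1 - w$1 / K)"
    by simp
  then obtain L where "L-lipschitz_on S (\<lambda>w. \<beta>E * w$3 * (1 - w$1 / K))"
    by (rule lipschitz_on_mult_compact[OF assms(2) lipschitz_on_cmult_real[OF nth]])
  then have "(L + \<bar>\<nu>E + \<delta>E\<bar> * 1)-lipschitz_on S egg_rate"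
    unfolding egg_rate_def[abs_def] by (intro lipschitz_on_diff lipschitz_on_cmult_real nth)
  then show ?thesis
    using assms(1) lin[OF linear_male_excess] lin[OF linear_male_rate]
    by (auto simp: constraints_def)
qed

lemma male_excess_growth:
  assumes w: "w \<in> Dprime" and v: "v \<in> filippov_map X Dprime w"
    and active: "male_excess w = violation w" and "0 < violation w"
  shows "male_excess v \<le> violation w"
proof -
  have "male_excess v \<le> male_rate w - (\<delta>s - k) * male_excess w"
  proof (rule filippov_map_linear_le[OF v linear_male_excess])
    fix y assume "y \<in> Dprime"
    then have "y$2 * (\<delta>s - k - \<kappa> * k) \<le> 0"
      using k by (intro mult_nonneg_nonpos) (auto simp: Dprime_nth_nonneg)
    moreover have "male_excess (X y) - (male_rate y - (\<delta>s - k) * male_excess y) = y$2 * (\<delta>s - k - \<kappa> * k)"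
      by (simp add: X_nth male_excess_def male_rate_def algebra_simps)
    ultimately show "male_excess (X y) \<le> male_rate y - (\<delta>s - k) * male_excess y"
      by linarith
  next
    show "isCont (\<lambda>y. male_rate y - (\<delta>s - k) * male_excess y) w"
      unfolding male_rate_def male_excess_def by (intro continuous_intros)
  qed
  also have "\<dots> \<le> violation w"
  proof -
    have "male_rate w \<le> violation w"
      by (simp add: violation_eq)
    moreover have "0 \<le> (\<delta>s - k) * male_excess w"
      using k(1) active \<open>0 < violation w\<close> by simp
    ultimately show ?thesis
      by linarith
  qed
  finally show ?thesis .
qed

lemma male_rate_growth:
  assumes w: "w \<in> Dprime" and v: "v \<in> filippov_map X Dprime w"
    and active: "male_rate w = violation w" and "0 < violation w"
  shows "male_rate v \<le> (1 - \<nu>) * \<nu>E * violation w"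
proof -
  have "male_rate v \<le> (1 - \<nu>) * \<nu>E * egg_rate w - \<delta>M * male_rate w"
  proof (rule filippov_map_linear_le[OF v linear_male_rate])
    show "male_rate (X y) \<le> (1 - \<nu>) * \<nu>E * egg_rate y - \<delta>M * male_rate y" for y
      by (simp add: X_nth male_rate_def)
    show "isCont (\<lambda>y. (1 - \<nu>) * \<nu>E * egg_rate y - \<delta>M * male_rate y) w"
      unfolding egg_rate_def male_rate_def by (intro continuous_intros) (use pos in simp)
  qed
  also have "\<dots> \<le> (1 - \<nu>) * \<nu>E * violation w"
  proof -
    have "(1 - \<nu>) * \<nu>E * egg_rate w \<le> (1 - \<nu>) * \<nu>E * violation w"
      using pos \<nu> by (intro mult_left_mono) (auto simp: violation_eq)
    moreover have "0 \<le> \<delta>M * male_rate w"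
      using pos active \<open>0 < violation w\<close> by simp
    ultimately show ?thesis
      by linarith
  qed
  finally show ?thesis .
qed

lemma egg_rate_growth:
  assumes w: "w \<in> Dprime" and v: "v \<in> filippov_map X Dprime w"
    and active: "egg_rate w = violation w" and "0 < violation w"
  shows "egg_rate_deriv w v \<le> \<beta>E * q * (\<delta>M + 1) * violation w"
proof -
  define a b where "a = \<beta>E * (1 - w$1 / K)" and "b = \<beta>E * w$3 / K + (\<nu>E + \<delta>E)"
  define P where "P y = \<nu> * \<nu>E * \<kappa> / (\<kappa> + \<gamma>s) * y$1 - \<delta>F * y$3 + q * (\<delta>M + 1) * max 0 (violation y)" for y
  have "0 < egg_rate w"
    using active \<open>0 < violation w\<close> by simp
  note egg = egg_rate_pos_imp[OF w this]
  have "0 \<le> a" "a \<le> \<beta>E" "0 \<le> b"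
    using egg(1) pos Dprime_nth_nonneg[OF w] by (auto simp: a_def b_def)
  have "egg_rate_deriv w v \<le> a * P w - b * egg_rate w"
  proof (rule filippov_map_linear_le[OF v])
    show "linear (egg_rate_deriv w)"
      by (rule linearI) (simp_all add: egg_rate_deriv_def algebra_simps add_divide_distrib)
    fix y assume "y \<in> Dprime"
    have "egg_rate_deriv w (X y) = a * X y $ 3 - b * egg_rate y"
      by (simp add: egg_rate_deriv_def X_nth a_def b_def)
    also have "\<dots> \<le> a * P y - b * egg_rate y"
      using female_rate_le[OF \<open>y \<in> Dprime\<close>] \<open>0 \<le> a\<close> by (simp add: P_def mult_left_mono)
    finally show "egg_rate_deriv w (X y) \<le> a * P y - b * egg_rate y" .
  next
    show "isCont (\<lambda>y. a * P y - b * egg_rate y) w"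
      unfolding P_def egg_rate_def by (intro continuous_intros isCont_violation) (use pos in simp)
  qed
  also have "\<dots> \<le> a * (q * (\<delta>M + 1) * violation w)"
  proof -
    have "P w \<le> q * (\<delta>M + 1) * violation w"
      using egg(2) \<open>0 < violation w\<close> by (simp add: P_def)
    then have "a * P w \<le> a * (q * (\<delta>M + 1) * violation w)"
      using \<open>0 \<le> a\<close> by (rule mult_left_mono)
    moreover have "0 \<le> b * egg_rate w"
      using \<open>0 \<le> b\<close> \<open>0 < egg_rate w\<close> by simp
    ultimately show ?thesis
      by linarith
  qed
  also have "\<dots> \<le> \<beta>E * q * (\<delta>M + 1) * violation w"
    using \<open>a \<le> \<beta>E\<close> q_nonneg pos \<open>0 < violation w\<close>
    by (simp add: mult_right_mono mult.assoc)
  finally show ?thesis .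
qed

lemma constraint_growth:
  assumes "\<phi> \<in> constraints" "w \<in> Dprime" "v \<in> filippov_map X Dprime w" "0 < violation w"
  shows "\<exists>\<phi>'. (\<phi> has_derivative \<phi>') (at w) \<and> (\<phi> w = violation w \<longrightarrow> \<phi>' v \<le> growth_bound * violation w)"
proof -
  have "0 \<le> (1 - \<nu>) * \<nu>E" "0 \<le> \<beta>E * q * (\<delta>M + 1)"
    using pos \<nu> q_nonneg by auto
  then have bounds: "1 \<le> growth_bound" "(1 - \<nu>) * \<nu>E \<le> growth_bound" "\<beta>E * q * (\<delta>M + 1) \<le> growth_bound"
    by (auto simp: growth_bound_def)
  have scale: "c * violation w \<le> growth_bound * violation w" if "c \<le> growth_bound" for c
    using that \<open>0 < violation w\<close> by (simp add: mult_right_mono)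
  consider "\<phi> = egg_rate" | "\<phi> = male_excess" | "\<phi> = male_rate"
    using assms(1) by (auto simp: constraints_def)
  then show ?thesis
  proof cases
    case 1
    have "egg_rate w = violation w \<Longrightarrow> egg_rate_deriv w v \<le> growth_bound * violation w"
      using egg_rate_growth[OF assms(2,3) _ assms(4)] scale[OF bounds(3)] by linarith
    then show ?thesis
      using egg_rate_has_derivative 1 by blast
  next
    case 2
    have "male_excess w = violation w \<Longrightarrow> male_excess v \<le> growth_bound * violation w"
      using male_excess_growth[OF assms(2,3) _ assms(4)] scale[OF bounds(1)] by linarith
    then show ?thesis
      using linear_imp_has_derivative[OF linear_male_excess] 2 by blast
  next
    case 3
    have "male_rate w = violation w \<Longrightarrow> male_rate v \<le> growth_bound * violation w"
      using male_rate_growth[OF assms(2,3) _ assms(4)] scale[OF bounds(2)] by linarith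
    then show ?thesis
      using linear_imp_has_derivative[OF linear_male_rate] 3 by blast
  qed
qed

theorem positively_invariant_Mset: "positively_invariant X Dprime (Mset \<beta>E \<nu>E \<delta>E K \<nu> \<delta>M \<kappa>)"
proof -
  have "positively_invariant X Dprime {w \<in> Dprime. Max ((\<lambda>\<phi>. \<phi> w) ` constraints) \<le> 0}"
    using lipschitz_constraint constraint_growth
    by (intro positively_invariant_if_barrier[where C = growth_bound])
      (auto simp: constraints_def violation_def)
  then show ?thesis
    by (simp add: Mset_eq violation_def)
qed

end

theorem theorem5:
  fixes \<beta>E \<nu>E \<delta>E \<delta>M \<delta>F \<delta>s K \<nu> \<gamma>s k \<kappa> :: real
  assumes "\<beta>E > 0" "\<nu>E > 0" "\<delta>E > 0" "\<delta>M > 0" "\<delta>F > 0" "\<delta>s > 0" "K > 0"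
    and "0 < \<nu>" "\<nu> < 1" "0 < \<gamma>s" "\<gamma>s \<le> 1" "\<delta>s \<ge> \<delta>M"
    and "R0 \<beta>E \<nu> \<nu>E \<delta>E \<delta>F > 1"
    and "(\<beta>E * \<nu> * \<nu>E - (\<nu>E + \<delta>E) * \<delta>F)
           / (\<beta>E * \<nu> * \<nu>E - (1 - \<gamma>s) * (\<nu>E + \<delta>E) * \<delta>F) * \<delta>s < k"
    and "k < \<delta>s"
    and "\<kappa> > 0"
    and "(\<delta>s - k) / k \<le> \<kappa>"
    and "\<kappa> \<le> \<gamma>s * \<delta>F * (\<nu>E + \<delta>E) / (\<beta>E * \<nu> * \<nu>E - \<delta>F * (\<nu>E + \<delta>E))"
  shows "positively_invariant (Xcl \<beta>E \<nu>E \<delta>E \<delta>M \<delta>F \<delta>s K \<nu> \<gamma>s k) Dprime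
           (Mset \<beta>E \<nu>E \<delta>E K \<nu> \<delta>M \<kappa>)"
proof -
  have "0 < \<delta>F * (\<nu>E + \<delta>E)"
    using assms by simp
  then have R0: "0 < \<beta>E * \<nu> * \<nu>E - \<delta>F * (\<nu>E + \<delta>E)"
    using assms(13) by (simp add: R0_def less_divide_eq_1_pos)
  moreover have "0 \<le> \<gamma>s * ((\<nu>E + \<delta>E) * \<delta>F)"
    using assms by simp
  ultimately have "0 < (\<beta>E * \<nu> * \<nu>E - (\<nu>E + \<delta>E) * \<delta>F)
      / (\<beta>E * \<nu> * \<nu>E - (1 - \<gamma>s) * (\<nu>E + \<delta>E) * \<delta>F) * \<delta>s"
    using assms(6) by (intro mult_pos_pos divide_pos_pos) (auto simp: algebra_simps)
  then have "0 < k"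
    using assms(14) by linarith
  then have "\<delta>s - k \<le> \<kappa> * k"
    using assms(17) by (simp add: pos_divide_le_eq)
  moreover have "\<kappa> * (\<beta>E * \<nu> * \<nu>E - \<delta>F * (\<nu>E + \<delta>E)) \<le> \<gamma>s * \<delta>F * (\<nu>E + \<delta>E)"
    using assms(18) R0 by (simp add: pos_le_divide_eq)
  ultimately interpret mosquito_release \<beta>E \<nu>E \<delta>E \<delta>M \<delta>F \<delta>s K \<nu> \<gamma>s k \<kappa>
    using assms by unfold_locales auto
  show ?thesis
    by (rule positively_invariant_Mset)
qed

end
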